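(* Let $p_{kl}=(p^1_{kl},p^2_{kl})$ and $c_{kl}=(c^1_{kl},c^2_{kl})$ be two parallel nets in the plane $\mathbb{R}^2$ with the same index set. They are Christoffel dual if and only if there is a collection of real numbers $h_{kl}$ such that for any adjacent vertices $c_{kl}$ and $c_{k'l'}$, $$h_{kl}-h_{k'l'}=(c^1_{kl}-c^1_{k'l'})\,p^2_{kl}-(c^2_{kl}-c^2_{k'l'})\,p^1_{kl}.$$
   Context: Here a (planar) net is a collection of points indexed by $(k,l)$ with $0\le k\le a$, $0\le l\le b$, whose faces are the (labeled, not necessarily convex) quadrilaterals $(k,l),(k+1,l),(k+1,l+1),(k,l+1)$; vertices are adjacent if their indices differ by $1$ in exactly one coordinate, and edges join adjacent vertices. Two nets are parallel if corresponding edges are parallel. Two labeled quadrilaterals $ABCD$ and $A'B'C'D'$ are dual if $AB\parallel A'B'$, $BC\parallel B'C'$, $CD\parallel C'D'$, $DA\parallel D'A'$, $AC\parallel B'D'$, $BD\parallel A'C'$. Two nets are Christoffel dual if their corresponding faces are dual. *)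

theory Defs
  imports Main "HOL.Real"
begin

type_synonym point = "real \<times> real"

text \<open>A net indexed by (k,l), 0 <= k <= a, 0 <= l <= b, is a map nat => nat => point
  (values outside the index range are irrelevant).\<close>
type_synonym net = "nat \<Rightarrow> nat \<Rightarrow> point"

definition par :: "point \<Rightarrow> point \<Rightarrow> point \<Rightarrow> point \<Rightarrow> bool" where
  "par P Q P' Q' \<longleftrightarrow>
     (fst Q - fst P) * (snd Q' - snd P') - (snd Q - snd P) * (fst Q' - fst P') = 0"

definition dual_quad :: "point \<Rightarrow> point \<Rightarrow> point \<Rightarrow> point \<Rightarrow>
                         point \<Rightarrow> point \<Rightarrow> point \<Rightarrow> point \<Rightarrow> bool" where
  "dual_quad A B C D A' B' C' D' \<longleftrightarrow>
     par A B A' B' \<and> par B C B' C' \<and> par C D C' D' \<and> par D A D' A' \<and>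
     par A C B' D' \<and> par B D A' C'"

definition adjacent :: "nat \<Rightarrow> nat \<Rightarrow> nat \<times> nat \<Rightarrow> nat \<times> nat \<Rightarrow> bool" where
  "adjacent a b v w \<longleftrightarrow>
     fst v \<le> a \<and> snd v \<le> b \<and> fst w \<le> a \<and> snd w \<le> b \<and>
     ((snd v = snd w \<and> (fst w = fst v + 1 \<or> fst v = fst w + 1)) \<or>
      (fst v = fst w \<and> (snd w = snd v + 1 \<or> snd v = snd w + 1)))"

definition parallel_nets :: "nat \<Rightarrow> nat \<Rightarrow> net \<Rightarrow> net \<Rightarrow> bool" where
  "parallel_nets a b p c \<longleftrightarrow>
     (\<forall>v w. adjacent a b v w \<longrightarrow>
        par (p (fst v) (snd v)) (p (fst w) (snd w)) (c (fst v) (snd v)) (c (fst w) (snd w)))"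

definition christoffel_dual :: "nat \<Rightarrow> nat \<Rightarrow> net \<Rightarrow> net \<Rightarrow> bool" where
  "christoffel_dual a b p c \<longleftrightarrow>
     (\<forall>k l. k < a \<and> l < b \<longrightarrow>
        dual_quad (p k l) (p (k+1) l) (p (k+1) (l+1)) (p k (l+1))
                  (c k l) (c (k+1) l) (c (k+1) (l+1)) (c k (l+1)))"

end

theory Submission
  imports Defs
begin

text \<open>Write \<open>x \<times> y\<close> for the planar cross product and \<open>\<omega>(v, w) = (c\<^sub>v - c\<^sub>w) \<times> p\<^sub>v\<close>
  for an oriented edge \<open>(v, w)\<close>; the function \<open>h\<close> is a potential of \<open>\<omega>\<close>.
  Since \<open>\<omega>(v, w) + \<omega>(w, v) = (c\<^sub>v - c\<^sub>w) \<times> (p\<^sub>v - p\<^sub>w)\<close>, parallel edges make \<open>\<omega>\<close>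
  antisymmetric. On a face \<open>ABCD\<close>/\<open>abcd\<close> with parallel edges, the circulation of \<open>\<omega>\<close> equals
  \<open>(C - A) \<times> (d - b)\<close> and also \<open>(B - D) \<times> (c - a)\<close>, modulo edge terms that vanish, so the
  face is dual iff \<open>\<omega>\<close> is closed around it. Finally, on a rectangular grid every closed
  antisymmetric edge function is exact: integrate along the bottom row and then up the columns.\<close>

definition edge_form :: "point \<Rightarrow> point \<Rightarrow> point \<Rightarrow> real" where
  "edge_form P x y = (fst x - fst y) * snd P - (snd x - snd y) * fst P"

definition quad_circulation :: "point \<Rightarrow> point \<Rightarrow> point \<Rightarrow> point \<Rightarrow>
                                point \<Rightarrow> point \<Rightarrow> point \<Rightarrow> point \<Rightarrow> real" where
  "quad_circulation A B C D a b c d =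
     edge_form A a b + edge_form B b c + edge_form C c d + edge_form D d a"

lemma edge_form_antisym:
  assumes "par P Q x y"
  shows "edge_form Q y x = - edge_form P x y"
  using assms unfolding par_def edge_form_def by algebra

lemma dual_quad_iff_circulation:
  assumes "par A B a b" "par B C b c" "par C D c d" "par D A d a"
  shows "dual_quad A B C D a b c d \<longleftrightarrow> quad_circulation A B C D a b c d = 0"
proof -
  have "quad_circulation A B C D a b c d =
      ((fst C - fst A) * (snd d - snd b) - (snd C - snd A) * (fst d - fst b))
    - ((fst C - fst B) * (snd c - snd b) - (snd C - snd B) * (fst c - fst b))
    - ((fst A - fst D) * (snd a - snd d) - (snd A - snd D) * (fst a - fst d))"
  and "quad_circulation A B C D a b c d =
    - ((fst D - fst B) * (snd c - snd a) - (snd D - snd B) * (fst c - fst a))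
    - ((fst B - fst A) * (snd b - snd a) - (snd B - snd A) * (fst b - fst a))
    - ((fst D - fst C) * (snd d - snd c) - (snd D - snd C) * (fst d - fst c))"
    unfolding quad_circulation_def edge_form_def by (simp_all add: algebra_simps)
  with assms show ?thesis
    unfolding dual_quad_def par_def by auto
qed

definition face_circulation :: "(nat \<Rightarrow> nat \<Rightarrow> nat \<Rightarrow> nat \<Rightarrow> 'a::ab_group_add) \<Rightarrow> nat \<Rightarrow> nat \<Rightarrow> 'a" where
  "face_circulation \<omega> k l =
     \<omega> k l (k+1) l + \<omega> (k+1) l (k+1) (l+1) + \<omega> (k+1) (l+1) k (l+1) + \<omega> k (l+1) k l"

lemma adjacent_face_edges:
  assumes "k < a" "l < b"
  shows "adjacent a b (k, l) (k+1, l)" "adjacent a b (k+1, l) (k+1, l+1)"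
    "adjacent a b (k+1, l+1) (k, l+1)" "adjacent a b (k, l+1) (k, l)"
  using assms unfolding adjacent_def by auto

lemma adjacent_cases:
  assumes "adjacent a b (k, l) (k', l')"
  obtains "l' = l" "k' = k + 1" "k < a" "l \<le> b"
    | "l' = l" "k = k' + 1" "k' < a" "l \<le> b"
    | "k' = k" "l' = l + 1"
    | "k' = k" "l = l' + 1"
  using assms unfolding adjacent_def by auto

lemma grid_exact_imp_closed:
  fixes \<omega> :: "nat \<Rightarrow> nat \<Rightarrow> nat \<Rightarrow> nat \<Rightarrow> 'a::ab_group_add"
  assumes exact: "\<And>k l k' l'. adjacent a b (k, l) (k', l') \<Longrightarrow> h k l - h k' l' = \<omega> k l k' l'"
    and "k < a" "l < b"
  shows "face_circulation \<omega> k l = 0"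
proof -
  note edges = adjacent_face_edges[OF \<open>k < a\<close> \<open>l < b\<close>, THEN exact]
  have "face_circulation \<omega> k l = (h k l - h (k+1) l) + (h (k+1) l - h (k+1) (l+1))
      + (h (k+1) (l+1) - h k (l+1)) + (h k (l+1) - h k l)"
    unfolding face_circulation_def edges ..
  also have "\<dots> = 0"
    by simp
  finally show ?thesis .
qed

lemma grid_closed_imp_exact:
  fixes \<omega> :: "nat \<Rightarrow> nat \<Rightarrow> nat \<Rightarrow> nat \<Rightarrow> 'a::ab_group_add"
  assumes antisym: "\<And>k l k' l'. adjacent a b (k, l) (k', l') \<Longrightarrow> \<omega> k' l' k l = - \<omega> k l k' l'"
    and closed: "\<And>k l. k < a \<Longrightarrow> l < b \<Longrightarrow> face_circulation \<omega> k l = 0"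
  obtains h where "\<And>k l k' l'. adjacent a b (k, l) (k', l') \<Longrightarrow> h k l - h k' l' = \<omega> k l k' l'"
proof
  define h where "h k l = (\<Sum>i<k. \<omega> (i+1) 0 i 0) + (\<Sum>j<l. \<omega> k (j+1) k j)" for k l
  have vertical: "h k (l+1) - h k l = \<omega> k (l+1) k l" for k l
    unfolding h_def by simp
  have horizontal: "h (k+1) l - h k l = \<omega> (k+1) l k l" if "k < a" "l \<le> b" for k l
    using that
  proof (induction l)
    case 0
    then show ?case unfolding h_def by simp
  next
    case (Suc l)
    have "h (k+1) (l+1) - h k (l+1) = (h (k+1) (l+1) - h (k+1) l) + (h (k+1) l - h k l) - (h k (l+1) - h k l)"
      by simp
    also have "\<dots> = \<omega> (k+1) (l+1) (k+1) l + \<omega> (k+1) l k l - \<omega> k (l+1) k l"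
      using vertical Suc by simp
    also have "\<dots> = \<omega> (k+1) (l+1) k (l+1)"
    proof -
      have "\<omega> (k+1) (l+1) k (l+1) = - \<omega> k l (k+1) l - \<omega> (k+1) l (k+1) (l+1) - \<omega> k (l+1) k l"
        using closed[of k l] Suc.prems unfolding face_circulation_def
        by (simp add: algebra_simps eq_neg_iff_add_eq_0 flip: diff_eq_eq)
      moreover have "\<omega> (k+1) l k l = - \<omega> k l (k+1) l"
        "\<omega> (k+1) (l+1) (k+1) l = - \<omega> (k+1) l (k+1) (l+1)"
        using adjacent_face_edges(1,2)[of k a l b, THEN antisym] Suc.prems by auto
      ultimately show ?thesis
        by (simp add: algebra_simps)
    qed
    finally show ?case by simp
  qed
  fix k l k' l'
  assume adj: "adjacent a b (k, l) (k', l')"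
  then show "h k l - h k' l' = \<omega> k l k' l'"
  proof (cases rule: adjacent_cases)
    case 1
    then show ?thesis using horizontal[of k l] antisym[OF adj] by (simp add: algebra_simps)
  next
    case 2
    then show ?thesis using horizontal[of k' l] by simp
  next
    case 3
    then show ?thesis using vertical[of k l] antisym[OF adj] by (simp add: algebra_simps)
  next
    case 4
    then show ?thesis using vertical[of k l'] by simp
  qed
qed

theorem lemma7:
  fixes a b :: nat and p c :: net
  assumes "parallel_nets a b p c"
  shows "christoffel_dual a b p c \<longleftrightarrow>
    (\<exists>h :: nat \<Rightarrow> nat \<Rightarrow> real. \<forall>k l k' l'. adjacent a b (k, l) (k', l') \<longrightarrow>
       h k l - h k' l' =
         (fst (c k l) - fst (c k' l')) * snd (p k l) - (snd (c k l) - snd (c k' l')) * fst (p k l))"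
proof -
  define \<omega> where "\<omega> k l k' l' = edge_form (p k l) (c k l) (c k' l')" for k l k' l'
  have edge_par: "par (p k l) (p k' l') (c k l) (c k' l')" if "adjacent a b (k, l) (k', l')" for k l k' l'
    using assms that unfolding parallel_nets_def by (metis fst_conv snd_conv)
  have antisym: "\<omega> k' l' k l = - \<omega> k l k' l'" if "adjacent a b (k, l) (k', l')" for k l k' l'
    unfolding \<omega>_def using edge_form_antisym[OF edge_par[OF that]] .
  have face_dual_iff: "dual_quad (p k l) (p (k+1) l) (p (k+1) (l+1)) (p k (l+1))
      (c k l) (c (k+1) l) (c (k+1) (l+1)) (c k (l+1)) \<longleftrightarrow> face_circulation \<omega> k l = 0"
    if "k < a" "l < b" for k l
    using dual_quad_iff_circulation[OF adjacent_face_edges[OF that, THEN edge_par]]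
    unfolding face_circulation_def quad_circulation_def \<omega>_def by simp
  have "christoffel_dual a b p c \<longleftrightarrow> (\<forall>k l. k < a \<and> l < b \<longrightarrow> face_circulation \<omega> k l = 0)"
    unfolding christoffel_dual_def using face_dual_iff by blast
  also have "\<dots> \<longleftrightarrow> (\<exists>h. \<forall>k l k' l'. adjacent a b (k, l) (k', l') \<longrightarrow> h k l - h k' l' = \<omega> k l k' l')"
  proof
    assume "\<forall>k l. k < a \<and> l < b \<longrightarrow> face_circulation \<omega> k l = 0"
    then obtain h where "\<And>k l k' l'. adjacent a b (k, l) (k', l') \<Longrightarrow> h k l - h k' l' = \<omega> k l k' l'"
      using grid_closed_imp_exact[of a b \<omega>] antisym by blast
    then show "\<exists>h. \<forall>k l k' l'. adjacent a b (k, l) (k', l') \<longrightarrow> h k l - h k' l' = \<omega> k l k' l'"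
      by blast
  qed (use grid_exact_imp_closed in blast)
  finally show ?thesis
    unfolding \<omega>_def edge_form_def .
qed

end
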